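(* For every positive integer $t$, $r_t\ge\frac13$.
   Context: A voter matrix with $t$ topics is a matrix $V\in\{Y,N\}^{n\times t}$ for some positive integer $n$ (rows are voters), subject to the standing assumption that in every column the number of entries $Y$ is at least the number of entries $N$. $\mathcal{V}_t$ is the set of all voter matrices with $t$ topics and any number of voters. A proposal is a vector $p\in\{Y,N\}^t$. A voter $v$ supports $p$ if the Hamming distance between $v$ and $p$ is at most $t/2$; $p$ is supported by $V$ if at least $n/2$ rows of $V$ support $p$. For $i=1,\dots,t$ let $m_i$ be the fraction of entries $Y$ in column $i$ of $V$, and $m_V=\frac1t\sum_i m_i$. For a proposal $p$ let $m_i'=m_i$ if $p_i=Y$ and $m_i'=1-m_i$ if $p_i=N$; set $R_p=\frac1t\sum_i m_i'$ and $r_p=R_p/m_V$. Let $r_V=\max r_p$ over all proposals $p$ supported by $V$, and $r_t=\inf_{V\in\mathcal{V}_t} r_V$. *)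

theory Defs
  imports Complex_Main
begin

text \<open>Entries: True = Y, False = N. A voter matrix is a nonempty list of rows
(voters), each row a list of length t.\<close>

definition countY :: "bool list list \<Rightarrow> nat \<Rightarrow> nat" where
  "countY V j = card {i. i < length V \<and> V ! i ! j}"

definition voter_matrix :: "nat \<Rightarrow> bool list list \<Rightarrow> bool" where
  "voter_matrix t V \<longleftrightarrow> V \<noteq> [] \<and> (\<forall>v\<in>set V. length v = t) \<and>
     (\<forall>j<t. countY V j \<ge> length V - countY V j)"

definition hamming :: "nat \<Rightarrow> bool list \<Rightarrow> bool list \<Rightarrow> nat" where
  "hamming t v p = card {j. j < t \<and> v ! j \<noteq> p ! j}"

definition supports :: "nat \<Rightarrow> bool list \<Rightarrow> bool list \<Rightarrow> bool" where
  "supports t v p \<longleftrightarrow> real (hamming t v p) \<le> real t / 2"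

definition supported :: "nat \<Rightarrow> bool list list \<Rightarrow> bool list \<Rightarrow> bool" where
  "supported t V p \<longleftrightarrow>
     real (card {i. i < length V \<and> supports t (V ! i) p}) \<ge> real (length V) / 2"

definition frac_m :: "bool list list \<Rightarrow> nat \<Rightarrow> real" where
  "frac_m V j = real (countY V j) / real (length V)"

definition m_V :: "nat \<Rightarrow> bool list list \<Rightarrow> real" where
  "m_V t V = (\<Sum>j<t. frac_m V j) / real t"

definition R_p :: "nat \<Rightarrow> bool list list \<Rightarrow> bool list \<Rightarrow> real" where
  "R_p t V p = (\<Sum>j<t. if p ! j then frac_m V j else 1 - frac_m V j) / real t"

definition r_p :: "nat \<Rightarrow> bool list list \<Rightarrow> bool list \<Rightarrow> real" where
  "r_p t V p = R_p t V p / m_V t V"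

definition r_V :: "nat \<Rightarrow> bool list list \<Rightarrow> real" where
  "r_V t V = Max (r_p t V ` {p. length p = t \<and> supported t V p})"

definition r_t :: "nat \<Rightarrow> real" where
  "r_t t = Inf (r_V t ` {V. voter_matrix t V})"

end

theory Submission
  imports Defs
begin

text \<open>Every voter is within distance t/2 of the all-Y proposal or of the all-N proposal, so
  one of the two is supported. The all-Y proposal has ratio 1. If it is not supported,
  more than half of the voters disagree with it on more than half of the topics, so
  more than a quarter of all entries are N, i.e. m_V < 3/4; since the majority
  assumption gives m_V \<ge> 1/2, the all-N proposal then has ratio (1 - m_V)/m_V > 1/3.\<close>

lemma card_filter_lessThan_eq_sum:
  fixes t :: nat
  shows "of_nat (card {j. j < t \<and> P j}) = (\<Sum>j<t. of_bool (P j) :: 'a::semiring_1)"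
proof -
  have "(\<Sum>j<t. of_bool (P j) :: 'a) = of_nat (card ({..<t} \<inter> {j. P j}))"
    by (rule sum_of_bool_eq) simp_all
  moreover have "{..<t} \<inter> {j. P j} = {j. j < t \<and> P j}" by auto
  ultimately show ?thesis by simp
qed

lemma card_filter_add_card_filter_not_lessThan:
  fixes t :: nat
  shows "card {j. j < t \<and> P j} + card {j. j < t \<and> \<not> P j} = t"
proof -
  have "card ({j. j < t \<and> P j} \<union> {j. j < t \<and> \<not> P j}) =
      card {j. j < t \<and> P j} + card {j. j < t \<and> \<not> P j}"
    by (rule card_Un_disjoint) auto
  moreover have "{j. j < t \<and> P j} \<union> {j. j < t \<and> \<not> P j} = {..<t}" by auto
  ultimately show ?thesis by simp
qed

lemma hamming_add_hamming_map_Not: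
  assumes "length p = t"
  shows "hamming t v p + hamming t v (map Not p) = t"
proof -
  have "{j. j < t \<and> v ! j \<noteq> map Not p ! j} = {j. j < t \<and> \<not> v ! j \<noteq> p ! j}"
    using assms by auto
  then show ?thesis
    unfolding hamming_def
    using card_filter_add_card_filter_not_lessThan[of t "\<lambda>j. v ! j \<noteq> p ! j"] by simp
qed

lemma supports_or_supports_map_Not:
  assumes "length p = t"
  shows "supports t v p \<or> supports t v (map Not p)"
  using hamming_add_hamming_map_Not[OF assms, of v] unfolding supports_def by linarith

lemma supported_map_Not_if_not_supported:
  assumes "length p = t" and "\<not> supported t V p"
  shows "supported t V (map Not p)"
proof -
  define S where "S q = {i. i < length V \<and> supports t (V ! i) q}" for q
  have "S p \<union> S (map Not p) = {..<length V}"
    using supports_or_supports_map_Not[OF assms(1)] unfolding S_def by auto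
  then have "length V \<le> card (S p) + card (S (map Not p))"
    using card_Un_le[of "S p" "S (map Not p)"] by simp
  moreover have "real (card (S p)) < real (length V) / 2"
    using assms(2) unfolding supported_def S_def by simp
  ultimately show ?thesis unfolding supported_def S_def[symmetric] by linarith
qed

lemma R_p_replicate_True: "R_p t V (replicate t True) = m_V t V"
  unfolding R_p_def m_V_def by simp

lemma R_p_map_Not_replicate_True:
  assumes "0 < t"
  shows "R_p t V (map Not (replicate t True)) = 1 - m_V t V"
  using assms unfolding R_p_def m_V_def by (simp add: sum_subtractf diff_divide_distrib)

lemma frac_m_ge_half:
  assumes "voter_matrix t V" and "j < t"
  shows "1 / 2 \<le> frac_m V j"
proof -
  have "length V - countY V j \<le> countY V j" and "V \<noteq> []"
    using assms unfolding voter_matrix_def by auto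
  then show ?thesis unfolding frac_m_def by (simp add: field_simps)
qed

lemma m_V_ge_half:
  assumes "voter_matrix t V" and "0 < t"
  shows "1 / 2 \<le> m_V t V"
proof -
  have "(\<Sum>j<t. 1 / 2) \<le> (\<Sum>j<t. frac_m V j)"
    using frac_m_ge_half[OF assms(1)] by (intro sum_mono) simp
  then show ?thesis unfolding m_V_def using assms(2) by (simp add: field_simps)
qed

lemma sum_hamming_replicate_True:
  "(\<Sum>i<length V. real (hamming t (V ! i) (replicate t True))) =
     real (length V) * real t * (1 - m_V t V)"
proof -
  define n where "n = length V"
  have countY_eq: "real (countY V j) = real n * frac_m V j" for j
    by (cases "n = 0") (simp_all add: frac_m_def countY_def n_def)
  have column_N: "(\<Sum>i<n. of_bool (\<not> V ! i ! j)) = real n - real (countY V j)" for j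
    using card_filter_add_card_filter_not_lessThan[of n "\<lambda>i. V ! i ! j"]
    unfolding countY_def n_def[symmetric] card_filter_lessThan_eq_sum[symmetric]
    by (simp add: algebra_simps flip: of_nat_add)
  have row_N: "real (hamming t (V ! i) (replicate t True)) = (\<Sum>j<t. of_bool (\<not> V ! i ! j))"
    for i
  proof -
    have "{j. j < t \<and> V ! i ! j \<noteq> replicate t True ! j} = {j. j < t \<and> \<not> V ! i ! j}"
      by auto
    then show ?thesis unfolding hamming_def card_filter_lessThan_eq_sum[symmetric] by simp
  qed
  have "(\<Sum>i<n. real (hamming t (V ! i) (replicate t True))) =
      (\<Sum>i<n. \<Sum>j<t. of_bool (\<not> V ! i ! j))"
    unfolding row_N ..
  also have "\<dots> = (\<Sum>j<t. real n - real n * frac_m V j)"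
    by (subst sum.swap) (simp add: column_N countY_eq)
  also have "\<dots> = real n * real t * (1 - m_V t V)"
  proof -
    have "(\<Sum>j<t. frac_m V j) = real t * m_V t V"
      by (cases "t = 0") (simp_all add: m_V_def)
    then show ?thesis by (simp add: sum_subtractf sum_distrib_left[symmetric] algebra_simps)
  qed
  finally show ?thesis unfolding n_def .
qed

lemma m_V_lt_three_quarters:
  assumes "0 < t" and "V \<noteq> []" and "\<not> supported t V (replicate t True)"
  shows "m_V t V < 3 / 4"
proof -
  define n where "n = length V"
  define h where "h i = real (hamming t (V ! i) (replicate t True))" for i
  define C where "C = {i. i < n \<and> \<not> supports t (V ! i) (replicate t True)}"
  have "card {i. i < n \<and> supports t (V ! i) (replicate t True)} + card C = n"
    unfolding C_def by (rule card_filter_add_card_filter_not_lessThan)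
  then have card_C: "real n / 2 < real (card C)"
    using assms(3) unfolding supported_def n_def[symmetric] by linarith
  then have "C \<noteq> {}" by auto
  have "real n / 2 * (real t / 2) < real (card C) * (real t / 2)"
    using card_C assms(1) by simp
  also have "\<dots> = (\<Sum>i\<in>C. real t / 2)" by simp
  also have "\<dots> < (\<Sum>i\<in>C. h i)"
    using \<open>C \<noteq> {}\<close> by (intro sum_strict_mono) (auto simp: C_def h_def supports_def)
  also have "\<dots> \<le> (\<Sum>i<n. h i)"
    by (intro sum_mono2) (auto simp: C_def h_def)
  also have "\<dots> = real n * real t * (1 - m_V t V)"
    unfolding h_def n_def by (rule sum_hamming_replicate_True)
  finally have "real n * real t * (1 / 4) < real n * real t * (1 - m_V t V)" by simp
  moreover have "0 < real n * real t" using assms(1,2) by (simp add: n_def)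
  ultimately have "1 / 4 < 1 - m_V t V" by (rule mult_less_cancel_left_pos[THEN iffD1, rotated])
  then show ?thesis by simp
qed

lemma r_p_le_r_V:
  assumes "length p = t" and "supported t V p"
  shows "r_p t V p \<le> r_V t V"
proof -
  have "finite {p :: bool list. length p = t}"
    using finite_lists_length_eq[of "UNIV :: bool set" t] by simp
  then have "finite {p. length p = t \<and> supported t V p}"
    by (rule rev_finite_subset) auto
  then show ?thesis unfolding r_V_def using assms by (intro Max_ge) auto
qed

lemma r_V_ge_one_third:
  assumes "voter_matrix t V" and "0 < t"
  shows "1 / 3 \<le> r_V t V"
proof -
  define Y where "Y = replicate t True"
  have m_half: "1 / 2 \<le> m_V t V" by (rule m_V_ge_half[OF assms])
  show ?thesis
  proof (cases "supported t V Y")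
    case True
    have "r_p t V Y = 1"
      unfolding r_p_def Y_def R_p_replicate_True using m_half by simp
    then show ?thesis using r_p_le_r_V[OF _ True] by (simp add: Y_def)
  next
    case False
    have "m_V t V < 3 / 4"
      using m_V_lt_three_quarters[OF assms(2) _ False[unfolded Y_def]] assms(1)
      by (simp add: voter_matrix_def)
    then have "1 / 3 \<le> r_p t V (map Not Y)"
      unfolding r_p_def Y_def R_p_map_Not_replicate_True[OF assms(2)]
      using m_half by (simp add: field_simps)
    also have "\<dots> \<le> r_V t V"
      using supported_map_Not_if_not_supported[OF _ False]
      by (intro r_p_le_r_V) (simp_all add: Y_def)
    finally show ?thesis .
  qed
qed

lemma voter_matrix_replicate_True: "voter_matrix t [replicate t True]"
proof -
  have "{i. i < 1 \<and> [replicate t True] ! i ! j} = {0}" if "j < t" for j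
    using that by auto
  then show ?thesis unfolding voter_matrix_def countY_def by simp
qed

theorem corollary5p4:
  fixes t :: nat
  assumes "0 < t"
  shows "r_t t \<ge> 1 / 3"
  unfolding r_t_def
proof (rule cInf_greatest)
  show "r_V t ` {V. voter_matrix t V} \<noteq> {}"
    using voter_matrix_replicate_True by blast
qed (use r_V_ge_one_third assms in auto)

end
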